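(* Let $0<x\le 1$ and $y\ge1$. Then for every $0<a<1$, $$\Gamma(x,y)\ \ge\ \frac{a}{1+a(y-1)}\Big(\frac{a}{e}\Big)^{x-1}\Big(\frac{1-x}{1-a}\Big)^{x-1}.$$ In particular, for all $0<x\le1$ and all $0<a<1$, $$\Gamma(x)\ \ge\ a^{x}e^{1-x}\Big(\frac{1-x}{1-a}\Big)^{x-1}.$$ (When $x=1$ the factor $\big(\frac{1-x}{1-a}\big)^{x-1}$ is interpreted as $0^0=1$.)
   Context: For $x>0,y>0$ the Bigamma function is the (convergent) improper integral $\Gamma(x,y):=\int_0^1(-\ln t)^{x-1}\big(-\ln(1-t)\big)^{y-1}\,dt$. $\Gamma(x)$ denotes Euler's gamma function; note $\Gamma(x,1)=\Gamma(x)$. *)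

theory Defs
  imports "HOL-Analysis.Analysis"
begin

text \<open>Bigamma function, as a (Lebesgue) integral over the open interval (0,1);
for x>0, y>0 the integrand is nonnegative and integrable, so this coincides with
the improper Riemann integral.\<close>
definition Bigamma :: "real \<Rightarrow> real \<Rightarrow> real" where
  "Bigamma x y = (LINT t:{0<..<1}|lborel. (- ln t) powr (x - 1) * (- ln (1 - t)) powr (y - 1))"

text \<open>Power with the convention 0^0 = 1 (Isabelle's powr has 0 powr 0 = 0).\<close>
definition pow00 :: "real \<Rightarrow> real \<Rightarrow> real" where
  "pow00 b e = (if e = 0 then 1 else b powr e)"

end

theory Submission
  imports Defs
begin

text \<open>
  Putting \<open>s = -p ln t\<close> in \<open>s \<le> exp (s - 1)\<close> gives \<open>-ln t \<le> t powr (-p) / (p e)\<close> for every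
  \<open>p > 0\<close>; raised to the nonpositive power \<open>x - 1\<close> this bounds \<open>(-ln t) powr (x - 1)\<close> from below
  by \<open>(p e) powr (1 - x) * t powr (p (1 - x))\<close>. Together with \<open>-ln (1 - t) \<ge> t\<close>, the Bigamma
  integrand dominates a multiple of a power of \<open>t\<close>, and integrating gives
  \<open>(p e) powr (1 - x) / (p (1 - x) + y) \<le> Bigamma x y\<close>; the substitution \<open>t = exp (-u)\<close> gives the
  same bound with \<open>y = 1\<close> for Euler's integral. The stated bounds are these for
  \<open>p = (1 - a) / (a (1 - x))\<close>.
\<close>

lemma minus_ln_le_powr:
  fixes t p :: real
  assumes "0 < t" "0 < p"
  shows "- ln t \<le> t powr (-p) / (p * exp 1)"
proof -
  define s where "s = - p * ln t"
  have "s \<le> exp (s - 1)"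
    using exp_ge_add_one_self[of "s - 1"] by simp
  also have "exp (s - 1) = t powr (-p) / exp 1"
    using assms by (simp add: s_def powr_def exp_diff)
  finally have "p * (- ln t) \<le> t powr (-p) / exp 1"
    by (simp add: s_def)
  thus ?thesis
    using assms by (simp add: field_simps)
qed

lemma powr_minus_ln_ge:
  fixes t p x :: real
  assumes "0 < t" "t < 1" "0 < p" "x \<le> 1"
  shows "(p * exp 1) powr (1 - x) * t powr (p * (1 - x)) \<le> (- ln t) powr (x - 1)"
proof -
  have "(t powr (-p) / (p * exp 1)) powr (x - 1) \<le> (- ln t) powr (x - 1)"
    using assms by (intro powr_mono2' minus_ln_le_powr) auto
  also have "(t powr (-p) / (p * exp 1)) powr (x - 1)
             = (t powr (-p)) powr (x - 1) / (p * exp 1) powr (x - 1)"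
    by (rule powr_divide)
  also have "\<dots> = (p * exp 1) powr (1 - x) * t powr (p * (1 - x))"
    using powr_minus[of "p * exp 1" "1 - x"]
    by (simp add: powr_powr divide_inverse algebra_simps)
  finally show ?thesis .
qed

lemma powr_minus_ln_le:
  fixes t r e :: real
  assumes "0 < t" "t < 1" "0 < r" "0 \<le> e"
  shows "(- ln t) powr e \<le> (r * exp 1) powr (-e) * t powr (- r * e)"
proof -
  have "(- ln t) powr e \<le> (t powr (-r) / (r * exp 1)) powr e"
    using assms by (intro powr_mono2 minus_ln_le_powr) auto
  also have "\<dots> = (t powr (-r)) powr e / (r * exp 1) powr e"
    by (rule powr_divide)
  also have "\<dots> = (r * exp 1) powr (-e) * t powr (- r * e)"
    using powr_minus[of "r * exp 1" e]
    by (simp add: powr_powr divide_inverse mult.commute)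
  finally show ?thesis .
qed

lemma integrable_on_one_minus_powr:
  fixes c :: real
  assumes "c > -1"
  shows "(\<lambda>t. (1 - t) powr c) integrable_on {0<..<1}"
proof -
  have "(\<lambda>t. t powr c) integrable_on cbox 0 1"
    using integrable_on_powr_from_0[OF assms, of 1] by simp
  from integrable_affinity[OF this, of "-1" 1]
  have "(\<lambda>t. (1 - t) powr c) integrable_on ((\<lambda>t. 1 - t) ` {0..1})"
    by simp
  moreover have "(\<lambda>t. 1 - t) ` {0..1} = {0..(1::real)}"
    by (auto intro!: image_eqI[where x = "1 - _"])
  ultimately show ?thesis
    by (simp add: integrable_on_open_interval_real)
qed

lemma Bigamma_integrand_le:
  fixes t x y r :: real
  assumes "0 < t" "t < 1" "x \<le> 1" "1 \<le> y" "0 < r"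
  shows "(- ln t) powr (x - 1) * (- ln (1 - t)) powr (y - 1)
         \<le> (r * exp 1) powr (1 - y) * (1 - t) powr (x - 1 - r * (y - 1))"
proof -
  have "(- ln t) powr (x - 1) \<le> (1 - t) powr (x - 1)"
    using assms ln_le_minus_one[of t] by (intro powr_mono2') auto
  moreover have "(- ln (1 - t)) powr (y - 1) \<le> (r * exp 1) powr (1 - y) * (1 - t) powr (- r * (y - 1))"
    using assms powr_minus_ln_le[of "1 - t" r "y - 1"] by simp
  ultimately have "(- ln t) powr (x - 1) * (- ln (1 - t)) powr (y - 1)
      \<le> (1 - t) powr (x - 1) * ((r * exp 1) powr (1 - y) * (1 - t) powr (- r * (y - 1)))"
    by (intro mult_mono) auto
  also have "\<dots> = (r * exp 1) powr (1 - y) * (1 - t) powr (x - 1 - r * (y - 1))"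
    using assms by (simp add: powr_add[symmetric] algebra_simps)
  finally show ?thesis .
qed

lemma Bigamma_has_integral:
  fixes x y :: real
  assumes "0 < x" "x \<le> 1" "1 \<le> y"
  shows "((\<lambda>t. (- ln t) powr (x - 1) * (- ln (1 - t)) powr (y - 1)) has_integral Bigamma x y) {0<..<1}"
proof -
  define f where "f = (\<lambda>t::real. (- ln t) powr (x - 1) * (- ln (1 - t)) powr (y - 1))"
  define r where "r = x / (2 * y)"
  define g where "g = (\<lambda>t::real. (r * exp 1) powr (1 - y) * (1 - t) powr (x - 1 - r * (y - 1)))"
  \<comment> \<open>any \<open>0 < r < x / (y - 1)\<close> makes the majorant \<open>g\<close> integrable\<close>
  have "x * (y - 1) < x * (2 * y)"
    using assms by (intro mult_strict_left_mono) auto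
  then have r: "0 < r" "r * (y - 1) < x"
    using assms by (auto simp: r_def pos_divide_less_eq)
  have "continuous_on {0<..<1} f"
    unfolding f_def by (intro continuous_intros) auto
  then have "f \<in> borel_measurable (lebesgue_on {0<..<1})"
    by (rule continuous_imp_measurable_on_sets_lebesgue) simp
  moreover have "g integrable_on {0<..<1}"
    unfolding g_def using integrable_on_one_minus_powr[of "x - 1 - r * (y - 1)"] r by simp
  ultimately have "f absolutely_integrable_on {0<..<1}"
    using assms r
    by (intro measurable_bounded_by_integrable_imp_absolutely_integrable[where g = g])
       (auto simp: f_def g_def intro!: Bigamma_integrand_le)
  moreover have "(\<lambda>t. indicator {0<..<1} t *\<^sub>R f t) \<in> borel_measurable lborel"
    unfolding f_def by measurable
  ultimately have "set_integrable lborel {0<..<1} f"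
    unfolding set_integrable_def by (simp add: integrable_completion)
  then show ?thesis
    using set_borel_integral_eq_integral[of "{0<..<1}" f]
    by (simp add: Bigamma_def f_def has_integral_integral)
qed

lemma Bigamma_ge:
  fixes x y p :: real
  assumes "0 < x" "x \<le> 1" "1 \<le> y" "0 < p"
  shows "(p * exp 1) powr (1 - x) / (p * (1 - x) + y) \<le> Bigamma x y"
proof -
  define K where "K = (p * exp 1) powr (1 - x)"
  define c where "c = p * (1 - x) + y - 1"
  have "p * (1 - x) \<ge> 0"
    using assms by simp
  then have "c \<ge> 0"
    unfolding c_def using assms by linarith
  then have "((\<lambda>t. K * t powr c) has_integral K / (c + 1)) {0<..<1}"
    using has_integral_mult_right[OF has_integral_powr_from_0[of c 1], of K]
          has_integral_open_interval[of "\<lambda>t. K * t powr c" "K / (c + 1)" 0 1] by simp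
  moreover have "K * t powr c \<le> (- ln t) powr (x - 1) * (- ln (1 - t)) powr (y - 1)"
    if "t \<in> {0<..<1}" for t
  proof -
    have "t powr (y - 1) \<le> (- ln (1 - t)) powr (y - 1)"
      using that assms ln_add_one_self_le_self2[of "- t"] by (intro powr_mono2) auto
    moreover have "K * t powr (p * (1 - x)) \<le> (- ln t) powr (x - 1)"
      unfolding K_def using that assms by (intro powr_minus_ln_ge) auto
    ultimately have "(K * t powr (p * (1 - x))) * t powr (y - 1)
                     \<le> (- ln t) powr (x - 1) * (- ln (1 - t)) powr (y - 1)"
      by (intro mult_mono) auto
    then show ?thesis
      using that by (simp add: c_def powr_add[symmetric] algebra_simps)
  qed
  ultimately have "K / (c + 1) \<le> Bigamma x y"
    by (rule has_integral_le[OF _ Bigamma_has_integral[OF assms(1-3)]])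
  then show ?thesis
    by (simp add: K_def c_def)
qed

lemma Gamma_ge:
  fixes x p :: real
  assumes "0 < x" "x \<le> 1" "0 < p"
  shows "(p * exp 1) powr (1 - x) / (p * (1 - x) + 1) \<le> Gamma x"
proof -
  define K where "K = (p * exp 1) powr (1 - x)"
  define b where "b = p * (1 - x) + 1"
  have "p * (1 - x) \<ge> 0"
    using assms by simp
  then have "b > 0"
    by (simp add: b_def)
  have spike: "negligible {u \<in> ({0..} :: real set) - {0<..}. f u \<noteq> 0}"
              "negligible {u \<in> ({0<..} :: real set) - {0..}. f u \<noteq> 0}" for f :: "real \<Rightarrow> real"
    by (rule negligible_subset[of "{0}"]; auto)+
  have "((\<lambda>u. K * exp (- b * u)) has_integral K * (1 / b)) {0<..}"
    using has_integral_mult_right[OF has_integral_exp_minus_to_infinity[OF \<open>b > 0\<close>, of 0], of K]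
          has_integral_spike_set_eq[OF spike] by simp
  moreover have "((\<lambda>u. u powr (x - 1) / exp u) has_integral Gamma x) {0<..}"
    using Gamma_integral_real[OF \<open>0 < x\<close>] has_integral_spike_set_eq[OF spike] by blast
  moreover have "K * exp (- b * u) \<le> u powr (x - 1) / exp u" if "u \<in> {0<..}" for u
  proof -
    have "K * exp (- u) powr (p * (1 - x)) \<le> (- ln (exp (- u))) powr (x - 1)"
      unfolding K_def using that assms by (intro powr_minus_ln_ge) auto
    then have "K * exp (- (p * (1 - x)) * u) / exp u \<le> u powr (x - 1) / exp u"
      by (simp add: powr_def mult_ac divide_right_mono)
    moreover have "K * exp (- b * u) = K * exp (- (p * (1 - x)) * u) / exp u"
      by (simp add: b_def algebra_simps exp_diff exp_add exp_minus field_simps)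
    ultimately show ?thesis
      by simp
  qed
  ultimately have "K * (1 / b) \<le> Gamma x"
    by (rule has_integral_le)
  then show ?thesis
    by (simp add: K_def b_def)
qed

lemma bound_reparam_eq:
  fixes a x z :: real
  assumes "0 < a" "a < 1" "x < 1"
  defines "p \<equiv> (1 - a) / (a * (1 - x))"
  shows "(p * exp 1) powr (1 - x) / (p * (1 - x) + z)
         = a / (1 + a * (z - 1)) * (a / exp 1) powr (x - 1) * ((1 - x) / (1 - a)) powr (x - 1)"
proof -
  have "(a / exp 1) powr (x - 1) * ((1 - x) / (1 - a)) powr (x - 1)
        = inverse (p * exp 1) powr (x - 1)"
    using assms by (subst powr_mult[symmetric]) (auto simp: p_def field_simps)
  also have "\<dots> = (p * exp 1) powr (1 - x)"
    by (metis inverse_powr minus_diff_eq powr_minus)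
  moreover have "p * (1 - x) + z = (1 + a * (z - 1)) / a"
    using assms by (simp add: p_def field_simps)
  ultimately show ?thesis
    by simp
qed

lemma powr_mult_exp_eq:
  fixes a x :: real
  assumes "0 < a"
  shows "a powr x * exp (1 - x) = a * (a / exp 1) powr (x - 1)"
  using assms powr_add[of a "x - 1" 1]
  by (simp add: powr_divide powr_def[of "exp 1"] exp_diff field_simps)

lemma Bigamma_lower_bound:
  fixes x y a :: real
  assumes "0 < x" "x \<le> 1" "1 \<le> y" "0 < a" "a < 1"
  shows "a / (1 + a * (y - 1)) * (a / exp 1) powr (x - 1) * pow00 ((1 - x) / (1 - a)) (x - 1)
         \<le> Bigamma x y"
proof (cases "x = 1")
  case True
  have "a / (1 + a * (y - 1)) \<le> 1 / y"
  proof -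
    have "0 \<le> a * (y - 1)"
      using assms by simp
    then have "0 < 1 + a * (y - 1)"
      by linarith
    moreover have "a * y \<le> 1 + a * (y - 1)"
      using assms by (simp add: algebra_simps)
    ultimately show ?thesis
      using assms by (simp add: divide_simps)
  qed
  also have "1 / y \<le> Bigamma x y"
    using Bigamma_ge[OF assms(1-3), of 1] True by simp
  finally show ?thesis
    using True assms by (simp add: pow00_def)
next
  case False
  then show ?thesis
    using Bigamma_ge[OF assms(1-3), of "(1 - a) / (a * (1 - x))"] bound_reparam_eq[of a x y] assms
    by (simp add: pow00_def)
qed

lemma Gamma_lower_bound:
  fixes x a :: real
  assumes "0 < x" "x \<le> 1" "0 < a" "a < 1"
  shows "a powr x * exp (1 - x) * pow00 ((1 - x) / (1 - a)) (x - 1) \<le> Gamma x"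
proof (cases "x = 1")
  case True
  then show ?thesis
    using assms by (simp add: pow00_def)
next
  case False
  then show ?thesis
    using Gamma_ge[OF assms(1,2), of "(1 - a) / (a * (1 - x))"] bound_reparam_eq[of a x 1]
          powr_mult_exp_eq[of a x] assms
    by (simp add: pow00_def)
qed

theorem mainTheorem5:
  shows "(\<forall>x y a::real. 0 < x \<and> x \<le> 1 \<and> 1 \<le> y \<and> 0 < a \<and> a < 1 \<longrightarrow>
            Bigamma x y \<ge> a / (1 + a * (y - 1)) * (a / exp 1) powr (x - 1)
                           * pow00 ((1 - x) / (1 - a)) (x - 1))
       \<and> (\<forall>x a::real. 0 < x \<and> x \<le> 1 \<and> 0 < a \<and> a < 1 \<longrightarrow>
            Gamma x \<ge> a powr x * exp (1 - x) * pow00 ((1 - x) / (1 - a)) (x - 1))"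
  using Bigamma_lower_bound Gamma_lower_bound by blast

end
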